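(* Let $n\ge 13$ and let $T^*$ be a chemical tree on $n$ vertices with maximum degree $\Delta(T^* )=3$ and at least $3$ vertices of degree $3$. Let $\Omega(n)$ be the set of chemical trees $T$ on $n$ vertices having $3$ vertices of degree $3$, $n-8$ vertices of degree $2$ and $5$ vertices of degree $1$, with $m_{1,2}(T)=m_{2,3}(T)=5$, $m_{1,3}(T)=0$, $m_{3,3}(T)=2$ and $m_{2,2}(T)=n-13$. If $T^*\notin\Omega(n)$, then there exists $T\in\Omega(n)$ such that $SO(T)<SO(T^* )$ and $SO_{red}(T)<SO_{red}(T^* )$.
   Context: A chemical tree is a tree with maximum degree at most $4$. $d_G(u)$ is the degree of $u$ and $m_{i,j}(G)$ is the number of edges joining a vertex of degree $i$ to a vertex of degree $j$. $SO(G)=\sum_{uv\in E(G)}\sqrt{d_G(u)^2+d_G(v)^2}$ and $SO_{red}(G)=\sum_{uv\in E(G)}\sqrt{(d_G(u)-1)^2+(d_G(v)-1)^2}$. *)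

theory Defs
  imports Complex_Main
begin

definition simple_graph :: "'a set \<Rightarrow> 'a set set \<Rightarrow> bool" where
  "simple_graph V E \<longleftrightarrow> finite V \<and> (\<forall>e\<in>E. e \<subseteq> V \<and> card e = 2)"

definition deg :: "'a set set \<Rightarrow> 'a \<Rightarrow> nat" where
  "deg E v = card {e \<in> E. v \<in> e}"

definition adj :: "'a set set \<Rightarrow> ('a \<times> 'a) set" where
  "adj E = {(u, v). {u, v} \<in> E \<and> u \<noteq> v}"

definition connected_graph :: "'a set \<Rightarrow> 'a set set \<Rightarrow> bool" where
  "connected_graph V E \<longleftrightarrow> (\<forall>u\<in>V. \<forall>v\<in>V. (u, v) \<in> (adj E)\<^sup>*)"

definition is_tree :: "'a set \<Rightarrow> 'a set set \<Rightarrow> bool" where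
  "is_tree V E \<longleftrightarrow> simple_graph V E \<and> V \<noteq> {} \<and> connected_graph V E \<and> card E = card V - 1"

definition chemical_tree :: "'a set \<Rightarrow> 'a set set \<Rightarrow> bool" where
  "chemical_tree V E \<longleftrightarrow> is_tree V E \<and> (\<forall>v\<in>V. deg E v \<le> 4)"

definition max_degree :: "'a set \<Rightarrow> 'a set set \<Rightarrow> nat" where
  "max_degree V E = Max (deg E ` V)"

definition num_deg :: "'a set \<Rightarrow> 'a set set \<Rightarrow> nat \<Rightarrow> nat" where
  "num_deg V E k = card {v \<in> V. deg E v = k}"

definition medges :: "'a set set \<Rightarrow> nat \<Rightarrow> nat \<Rightarrow> nat" where
  "medges E i j = card {e \<in> E. \<exists>u v. e = {u, v} \<and> u \<noteq> v \<and>
      ((deg E u = i \<and> deg E v = j) \<or> (deg E u = j \<and> deg E v = i))}"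

definition SO :: "'a set set \<Rightarrow> real" where
  "SO E = (\<Sum>e\<in>E. sqrt (\<Sum>v\<in>e. (real (deg E v))\<^sup>2))"

definition SO_red :: "'a set set \<Rightarrow> real" where
  "SO_red E = (\<Sum>e\<in>E. sqrt (\<Sum>v\<in>e. (real (deg E v) - 1)\<^sup>2))"

definition Omega :: "nat \<Rightarrow> ('a set \<times> 'a set set) set" where
  "Omega n = {(V, E). chemical_tree V E \<and> card V = n \<and>
      num_deg V E 3 = 3 \<and> num_deg V E 2 = n - 8 \<and> num_deg V E 1 = 5 \<and>
      medges E 1 2 = 5 \<and> medges E 2 3 = 5 \<and> medges E 1 3 = 0 \<and>
      medges E 3 3 = 2 \<and> medges E 2 2 = n - 13}"

end

(*
  For a tree with all degrees in {1, 2, 3}, the counts n_1, n_2, m_{1,2}, m_{2,2} and m_{2,3}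
  are determined by n and by k = n_3, a = m_{1,3}, x = m_{3,3}, and m_{1,1} = 0 once n >= 3.
  So SO and SO_red are affine in (k, a, x), and the trees of Omega(n) are exactly those with
  (k, a, x) = (3, 0, 2). The excess over Omega(n) is (k - 3) c_1 + a c_2 + (x - 2) c_3 with
  c_1, c_2 > 0 > c_3 and c_1 + 4 c_3 > 0, which is positive for T*: if k = 3 then x <= 2,
  since a tree has no triangle, and (3, 0, 2) itself is excluded; if k >= 4, the degree sum
  at degree 3 gives 2 x <= 3 k. Omega(n) is nonempty: a tree in Omega(13) grows by hanging
  new leaves on leaves and is relabelled onto any vertex set of size n.
*)

theory Submission
  imports Defs
begin

section \<open>Counting edges by the degrees of their ends\<close>

lemma simple_graph_finite_edges: "simple_graph V E \<Longrightarrow> finite E"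
  unfolding simple_graph_def by (meson Pow_iff finite_Pow_iff finite_subset subsetI)

lemma simple_graph_edge_subset: "simple_graph V E \<Longrightarrow> e \<in> E \<Longrightarrow> e \<subseteq> V"
  unfolding simple_graph_def by blast

lemma simple_graph_edgeE:
  assumes "simple_graph V E" and "e \<in> E"
  obtains u v where "e = {u, v}" "u \<noteq> v" "u \<in> V" "v \<in> V"
  using assms unfolding simple_graph_def by (metis card_2_iff insert_subset)

definition edge_type :: "'a set set \<Rightarrow> 'a set \<Rightarrow> nat \<times> nat" where
  "edge_type E e = (Min (deg E ` e), Max (deg E ` e))"

lemma edge_type_doubleton:
  "edge_type E {u, v} = (min (deg E u) (deg E v), max (deg E u) (deg E v))"
  by (simp add: edge_type_def)

lemma medges_eq_card_edge_type:
  assumes sg: "simple_graph V E" and "i \<le> j"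
  shows "medges E i j = card {e \<in> E. edge_type E e = (i, j)}"
  unfolding medges_def
proof (intro arg_cong[where f = card] Collect_cong conj_cong refl)
  fix e assume "e \<in> E"
  with sg obtain u v where "e = {u, v}" "u \<noteq> v" by (rule simple_graph_edgeE)
  then show "(\<exists>u v. e = {u, v} \<and> u \<noteq> v \<and>
      (deg E u = i \<and> deg E v = j \<or> deg E u = j \<and> deg E v = i)) \<longleftrightarrow> edge_type E e = (i, j)"
    using \<open>i \<le> j\<close> by (auto simp: edge_type_doubleton doubleton_eq_iff min_def max_def)
qed

lemma sum_edges_by_type:
  fixes f :: "nat \<times> nat \<Rightarrow> 'b::comm_semiring_1"
  assumes "finite E" and "finite P" and "edge_type E ` E \<subseteq> P"
  shows "(\<Sum>e\<in>E. f (edge_type E e)) = (\<Sum>p\<in>P. of_nat (card {e \<in> E. edge_type E e = p}) * f p)"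
proof -
  have "(\<Sum>e\<in>E. f (edge_type E e))
      = (\<Sum>p\<in>edge_type E ` E. \<Sum>e\<in>{e \<in> E. edge_type E e = p}. f (edge_type E e))"
    using \<open>finite E\<close> by (rule sum.image_gen)
  also have "\<dots> = (\<Sum>p\<in>edge_type E ` E. of_nat (card {e \<in> E. edge_type E e = p}) * f p)"
    by (intro sum.cong refl) simp
  also have "\<dots> = (\<Sum>p\<in>P. of_nat (card {e \<in> E. edge_type E e = p}) * f p)"
  proof (rule sum.mono_neutral_left)
    show "\<forall>p\<in>P - edge_type E ` E. of_nat (card {e \<in> E. edge_type E e = p}) * f p = 0"
    proof
      fix p assume "p \<in> P - edge_type E ` E"
      then have empty: "{e \<in> E. edge_type E e = p} = {}" by blast
      show "of_nat (card {e \<in> E. edge_type E e = p}) * f p = 0"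
        unfolding empty by simp
    qed
  qed (use assms in auto)
  finally show ?thesis .
qed

lemma sum_edges_by_type_123:
  fixes f :: "nat \<times> nat \<Rightarrow> 'b::comm_semiring_1"
  assumes sg: "simple_graph V E" and deg: "\<forall>v\<in>V. deg E v \<in> {1, 2, 3}"
  shows "(\<Sum>e\<in>E. f (edge_type E e)) =
    of_nat (medges E 1 1) * f (1, 1) + of_nat (medges E 1 2) * f (1, 2) +
    of_nat (medges E 1 3) * f (1, 3) + of_nat (medges E 2 2) * f (2, 2) +
    of_nat (medges E 2 3) * f (2, 3) + of_nat (medges E 3 3) * f (3, 3)"
proof -
  let ?P = "{(1, 1), (1, 2), (1, 3), (2, 2), (2, 3), (3, 3)} :: (nat \<times> nat) set"
  have "edge_type E ` E \<subseteq> ?P"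
  proof
    fix p assume "p \<in> edge_type E ` E"
    then obtain e where "e \<in> E" "p = edge_type E e" by blast
    moreover from sg \<open>e \<in> E\<close> obtain u v where "e = {u, v}" "u \<in> V" "v \<in> V"
      by (rule simple_graph_edgeE)
    moreover have "deg E u \<in> {1, 2, 3}" "deg E v \<in> {1, 2, 3}"
      using deg \<open>u \<in> V\<close> \<open>v \<in> V\<close> by auto
    ultimately show "p \<in> ?P"
      by (auto simp: edge_type_doubleton min_def max_def)
  qed
  with sum_edges_by_type[OF simple_graph_finite_edges[OF sg], of ?P f] show ?thesis
    by (simp add: medges_eq_card_edge_type[OF sg] add.assoc)
qed

lemma sum_edge_endpoints:
  assumes "simple_graph V E" and "e \<in> E"
  shows "(\<Sum>v\<in>e. g (deg E v)) = g (fst (edge_type E e)) + g (snd (edge_type E e))"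
proof -
  obtain u v where "e = {u, v}" "u \<noteq> v" using assms by (rule simple_graph_edgeE)
  then show ?thesis
    by (cases "deg E u \<le> deg E v") (auto simp: edge_type_doubleton add.commute)
qed

lemma sum_deg_eq_sum_edges:
  assumes sg: "simple_graph V E"
  shows "(\<Sum>v\<in>V. of_nat (deg E v) * g v) = (\<Sum>e\<in>E. \<Sum>v\<in>e. g v :: 'b::comm_semiring_1)"
proof -
  have fV: "finite V" and fE: "finite E"
    using sg simple_graph_finite_edges by (auto simp: simple_graph_def)
  have "(\<Sum>v\<in>V. of_nat (deg E v) * g v) = (\<Sum>v\<in>V. \<Sum>e\<in>E. if v \<in> e then g v else 0)"
    by (simp add: deg_def sum.If_cases[OF fE] Int_def)
  also have "\<dots> = (\<Sum>e\<in>E. \<Sum>v\<in>V. if v \<in> e then g v else 0)"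
    by (rule sum.swap)
  also have "\<dots> = (\<Sum>e\<in>E. \<Sum>v\<in>e. g v)"
  proof (rule sum.cong[OF refl])
    fix e assume "e \<in> E"
    then have "{v \<in> V. v \<in> e} = e" using simple_graph_edge_subset[OF sg] by blast
    then show "(\<Sum>v\<in>V. if v \<in> e then g v else 0) = (\<Sum>v\<in>e. g v)"
      by (metis sum.inter_filter[OF fV])
  qed
  finally show ?thesis .
qed

lemma card_vertices_123:
  assumes "finite V" and "\<forall>v\<in>V. deg E v \<in> {1, 2, 3}"
  shows "card V = num_deg V E 1 + num_deg V E 2 + num_deg V E 3"
proof -
  have "V = {v \<in> V. deg E v = 1} \<union> {v \<in> V. deg E v = 2} \<union> {v \<in> V. deg E v = 3}"
    using assms(2) by auto
  also have "card \<dots> = num_deg V E 1 + num_deg V E 2 + num_deg V E 3"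
    using assms(1) unfolding num_deg_def by (subst card_Un_disjoint; auto)+
  finally show ?thesis .
qed

lemma card_edges_123:
  assumes "simple_graph V E" and "\<forall>v\<in>V. deg E v \<in> {1, 2, 3}"
  shows "card E = medges E 1 1 + medges E 1 2 + medges E 1 3 + medges E 2 2 +
    medges E 2 3 + medges E 3 3"
  using sum_edges_by_type_123[OF assms, of "\<lambda>_. 1::nat"] by simp

lemma degree_count:
  assumes sg: "simple_graph V E"
  shows "t * num_deg V E t = (\<Sum>e\<in>E. (if fst (edge_type E e) = t then 1 else 0) +
    (if snd (edge_type E e) = t then 1 else 0))"
proof -
  have fV: "finite V" using sg by (simp add: simple_graph_def)
  have "t * num_deg V E t = (\<Sum>v\<in>{v \<in> V. deg E v = t}. t)"
    by (simp add: num_deg_def)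
  also have "\<dots> = (\<Sum>v\<in>V. if deg E v = t then t else 0)"
    by (rule sum.inter_filter[OF fV])
  also have "\<dots> = (\<Sum>v\<in>V. deg E v * (if deg E v = t then 1 else 0))"
    by (intro sum.cong) auto
  also have "\<dots> = (\<Sum>e\<in>E. \<Sum>v\<in>e. if deg E v = t then 1 else 0)"
    using sum_deg_eq_sum_edges[OF sg, of "\<lambda>v. if deg E v = t then 1 else 0 :: nat"] by simp
  also have "\<dots> = (\<Sum>e\<in>E. (if fst (edge_type E e) = t then 1 else 0) +
      (if snd (edge_type E e) = t then 1 else 0))"
    by (intro sum.cong refl sum_edge_endpoints[OF sg, where g = "\<lambda>d. if d = t then 1 else 0"])
  finally show ?thesis .
qed

lemma degree_count_123:
  assumes "simple_graph V E" and "\<forall>v\<in>V. deg E v \<in> {1, 2, 3}"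
  shows "num_deg V E 1 = 2 * medges E 1 1 + medges E 1 2 + medges E 1 3"
    and "2 * num_deg V E 2 = medges E 1 2 + 2 * medges E 2 2 + medges E 2 3"
    and "3 * num_deg V E 3 = medges E 1 3 + medges E 2 3 + 2 * medges E 3 3"
proof -
  have "t * num_deg V E t =
    medges E 1 1 * ((if 1 = t then 1 else 0) + (if 1 = t then 1 else 0)) +
    medges E 1 2 * ((if 1 = t then 1 else 0) + (if 2 = t then 1 else 0)) +
    medges E 1 3 * ((if 1 = t then 1 else 0) + (if 3 = t then 1 else 0)) +
    medges E 2 2 * ((if 2 = t then 1 else 0) + (if 2 = t then 1 else 0)) +
    medges E 2 3 * ((if 2 = t then 1 else 0) + (if 3 = t then 1 else 0)) +
    medges E 3 3 * ((if 3 = t then 1 else 0) + (if 3 = t then 1 else 0))" for t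
    unfolding degree_count[OF assms(1)]
    using sum_edges_by_type_123[OF assms,
        of "\<lambda>p. (if fst p = t then 1 else 0) + (if snd p = t then 1 else 0) :: nat"]
    by simp
  from this[of 1] this[of 2] this[of 3] show
    "num_deg V E 1 = 2 * medges E 1 1 + medges E 1 2 + medges E 1 3"
    "2 * num_deg V E 2 = medges E 1 2 + 2 * medges E 2 2 + medges E 2 3"
    "3 * num_deg V E 3 = medges E 1 3 + medges E 2 3 + 2 * medges E 3 3"
    by simp_all
qed

lemma SO_123:
  assumes sg: "simple_graph V E" and "\<forall>v\<in>V. deg E v \<in> {1, 2, 3}"
  shows "SO E = medges E 1 1 * sqrt 2 + medges E 1 2 * sqrt 5 + medges E 1 3 * sqrt 10 +
    medges E 2 2 * sqrt 8 + medges E 2 3 * sqrt 13 + medges E 3 3 * sqrt 18"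
proof -
  have "SO E = (\<Sum>e\<in>E. sqrt ((real (fst (edge_type E e)))\<^sup>2 + (real (snd (edge_type E e)))\<^sup>2))"
    unfolding SO_def using sum_edge_endpoints[OF sg] by (intro sum.cong) auto
  then show ?thesis
    using sum_edges_by_type_123[OF assms, of "\<lambda>p. sqrt ((real (fst p))\<^sup>2 + (real (snd p))\<^sup>2)"]
    by simp
qed

lemma SO_red_123:
  assumes sg: "simple_graph V E" and "\<forall>v\<in>V. deg E v \<in> {1, 2, 3}"
  shows "SO_red E = medges E 1 2 + 2 * medges E 1 3 + medges E 2 2 * sqrt 2 +
    medges E 2 3 * sqrt 5 + medges E 3 3 * sqrt 8"
proof -
  have "SO_red E = (\<Sum>e\<in>E. sqrt ((real (fst (edge_type E e)) - 1)\<^sup>2 +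
      (real (snd (edge_type E e)) - 1)\<^sup>2))"
    unfolding SO_red_def using sum_edge_endpoints[OF sg] by (intro sum.cong) auto
  moreover have "sqrt 4 = 2" by (simp add: real_sqrt_unique)
  ultimately show ?thesis
    using sum_edges_by_type_123[OF assms,
        of "\<lambda>p. sqrt ((real (fst p) - 1)\<^sup>2 + (real (snd p) - 1)\<^sup>2)"]
    by simp
qed

section \<open>Connected graphs and trees\<close>

lemma connected_graph_closed:
  assumes "connected_graph V E" and "x \<in> V" and "x \<in> S"
    and closed: "\<And>a b. (a, b) \<in> adj E \<Longrightarrow> a \<in> S \<Longrightarrow> b \<in> S"
  shows "V \<subseteq> S"
proof
  fix y assume "y \<in> V"
  with assms have "(x, y) \<in> (adj E)\<^sup>*" unfolding connected_graph_def by blast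
  then show "y \<in> S" by induction (use \<open>x \<in> S\<close> closed in auto)
qed

lemma connected_graph_deg_pos:
  assumes sg: "simple_graph V E" and "connected_graph V E" and "2 \<le> card V" and "v \<in> V"
  shows "0 < deg E v"
proof (rule ccontr)
  assume "\<not> 0 < deg E v"
  then have "{e \<in> E. v \<in> e} = {}"
    using simple_graph_finite_edges[OF sg] by (simp add: deg_def)
  then have "V \<subseteq> {v}"
    using assms by (intro connected_graph_closed[of V E v]) (auto simp: adj_def)
  then show False
    using \<open>2 \<le> card V\<close> card_mono[of "{v}" V] by simp
qed

lemma connected_graph_medges_1_1:
  assumes sg: "simple_graph V E" and conn: "connected_graph V E" and "3 \<le> card V"
  shows "medges E 1 1 = 0"
proof -
  have False if "{u, v} \<in> E" "deg E u = 1" "deg E v = 1" for u v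
  proof -
    have only_edge: "f = {u, v}" if "w \<in> {u, v}" "f \<in> E" "w \<in> f" for w f
    proof -
      have "card {h \<in> E. w \<in> h} = 1"
        using \<open>w \<in> {u, v}\<close> \<open>deg E u = 1\<close> \<open>deg E v = 1\<close> by (auto simp: deg_def)
      then obtain g where g: "{h \<in> E. w \<in> h} = {g}" by (rule card_1_singletonE)
      have "f \<in> {h \<in> E. w \<in> h}" "{u, v} \<in> {h \<in> E. w \<in> h}"
        using that \<open>{u, v} \<in> E\<close> by auto
      then show ?thesis unfolding g by simp
    qed
    have "u \<in> V" using sg \<open>{u, v} \<in> E\<close> by (auto dest: simple_graph_edge_subset)
    moreover have "b \<in> {u, v}" if "(a, b) \<in> adj E" "a \<in> {u, v}" for a b
    proof -
      have "{a, b} \<in> E" using that(1) by (simp add: adj_def)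
      then have "{a, b} = {u, v}" using only_edge[OF that(2)] by blast
      then show ?thesis by blast
    qed
    ultimately have "V \<subseteq> {u, v}"
      using conn by (intro connected_graph_closed[of V E u]) auto
    then show False
      using \<open>3 \<le> card V\<close> card_mono[of "{u, v}" V] card_2_iff[of "{u, v}"]
      by (cases "u = v") auto
  qed
  then have empty: "{e \<in> E. \<exists>u v. e = {u, v} \<and> u \<noteq> v \<and>
      (deg E u = 1 \<and> deg E v = 1 \<or> deg E u = 1 \<and> deg E v = 1)} = {}"
    by blast
  show ?thesis unfolding medges_def empty by simp
qed

lemma connected_graph_card_le:
  assumes sg: "simple_graph V E" and conn: "connected_graph V E" and "r \<in> V"
  shows "card V \<le> card E + 1"
proof -
  define dist where "dist v = (LEAST k. (r, v) \<in> adj E ^^ k)" for v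
  have parent: "\<exists>u. {u, v} \<in> E \<and> dist u < dist v" if v: "v \<in> V - {r}" for v
  proof -
    have "\<exists>k. (r, v) \<in> adj E ^^ k"
      using conn \<open>r \<in> V\<close> v rtrancl_power unfolding connected_graph_def by blast
    then have path: "(r, v) \<in> adj E ^^ dist v"
      unfolding dist_def by (rule LeastI_ex)
    then obtain d where "dist v = Suc d"
      using v by (cases "dist v") auto
    with path obtain u where "(r, u) \<in> adj E ^^ d" "(u, v) \<in> adj E" by auto
    then have "dist u \<le> d" "{u, v} \<in> E"
      unfolding dist_def by (auto intro: Least_le simp: adj_def)
    with \<open>dist v = Suc d\<close> show ?thesis by auto
  qed
  define p where "p v = (SOME u. {u, v} \<in> E \<and> dist u < dist v)" for v
  have p: "{p v, v} \<in> E \<and> dist (p v) < dist v" if "v \<in> V - {r}" for v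
    unfolding p_def using someI_ex[OF parent[OF that]] .
  have "inj_on (\<lambda>v. {p v, v}) (V - {r})"
  proof (rule inj_onI)
    fix v w assume v: "v \<in> V - {r}" and w: "w \<in> V - {r}" and "{p v, v} = {p w, w}"
    then have "v = w \<or> (v = p w \<and> w = p v)" by (auto simp: doubleton_eq_iff)
    then show "v = w" using p[OF v] p[OF w] by auto
  qed
  moreover have "(\<lambda>v. {p v, v}) ` (V - {r}) \<subseteq> E" using p by auto
  ultimately have "card (V - {r}) \<le> card E"
    using simple_graph_finite_edges[OF sg] by (rule card_inj_on_le)
  then show ?thesis using \<open>r \<in> V\<close> by simp
qed

lemma sym_adj: "sym (adj E)"
  by (auto simp: sym_def adj_def insert_commute)

lemma connected_graph_from_root:
  assumes "r \<in> V" and "\<forall>v\<in>V. (r, v) \<in> (adj E)\<^sup>*"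
  shows "connected_graph V E"
  unfolding connected_graph_def
proof (intro ballI)
  fix u w assume "u \<in> V" "w \<in> V"
  then have "(r, u) \<in> (adj E)\<^sup>*" "(r, w) \<in> (adj E)\<^sup>*"
    using assms by auto
  from this(1) have "(u, r) \<in> (adj E)\<^sup>*"
    by (rule symD[OF sym_rtrancl[OF sym_adj]])
  then show "(u, w) \<in> (adj E)\<^sup>*"
    using \<open>(r, w) \<in> (adj E)\<^sup>*\<close> by (rule rtrancl_trans)
qed

lemma connected_graph_remove_edge:
  assumes conn: "connected_graph V E" and ab: "(a, b) \<in> (adj (E - {{a, b}}))\<^sup>*"
  shows "connected_graph V (E - {{a, b}})"
proof -
  let ?R = "adj (E - {{a, b}})"
  have "(b, a) \<in> ?R\<^sup>*"
    using sym_rtrancl[OF sym_adj] ab by (rule symD)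
  with ab have "adj E \<subseteq> ?R\<^sup>*"
    by (auto simp: adj_def doubleton_eq_iff)
  then have "(adj E)\<^sup>* \<subseteq> ?R\<^sup>*"
    by (rule rtrancl_subset_rtrancl)
  with conn show ?thesis
    unfolding connected_graph_def by blast
qed

lemma is_tree_no_triangle:
  assumes tree: "is_tree V E" and edges: "{a, b} \<in> E" "{b, c} \<in> E" "{a, c} \<in> E"
    and distinct: "a \<noteq> b" "b \<noteq> c" "a \<noteq> c"
  shows False
proof -
  let ?E' = "E - {{a, b}}"
  have sg: "simple_graph V E" and conn: "connected_graph V E" and "V \<noteq> {}"
    and card_E: "card E = card V - 1"
    using tree by (auto simp: is_tree_def)
  have "{a, c} \<in> ?E'" "{c, b} \<in> ?E'"
    using edges distinct by (auto simp: doubleton_eq_iff insert_commute)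
  then have "(a, c) \<in> adj ?E'" "(c, b) \<in> adj ?E'"
    using distinct by (auto simp: adj_def)
  then have "(a, b) \<in> (adj ?E')\<^sup>*" by auto
  then have "connected_graph V ?E'"
    by (rule connected_graph_remove_edge[OF conn])
  moreover have "simple_graph V ?E'" using sg by (auto simp: simple_graph_def)
  moreover obtain r where "r \<in> V" using \<open>V \<noteq> {}\<close> by blast
  ultimately have "card V \<le> card ?E' + 1" by (intro connected_graph_card_le)
  moreover have "card ?E' = card E - 1" "card E \<noteq> 0"
    using edges simple_graph_finite_edges[OF sg] by auto
  ultimately show False using card_E by linarith
qed

lemma is_tree_medges_le_2:
  assumes tree: "is_tree V E" and "num_deg V E k = 3"
  shows "medges E k k \<le> 2"
proof (rule ccontr)
  assume "\<not> medges E k k \<le> 2"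
  have sg: "simple_graph V E" using tree by (simp add: is_tree_def)
  obtain a b c where deg_k: "{v \<in> V. deg E v = k} = {a, b, c}" and "a \<noteq> b" "b \<noteq> c" "a \<noteq> c"
    using \<open>num_deg V E k = 3\<close> unfolding num_deg_def card_3_iff by blast
  let ?F = "{e \<in> E. \<exists>u v. e = {u, v} \<and> u \<noteq> v \<and>
      (deg E u = k \<and> deg E v = k \<or> deg E u = k \<and> deg E v = k)}"
  have "?F \<subseteq> {{a, b}, {b, c}, {a, c}}"
  proof
    fix e assume "e \<in> ?F"
    then obtain u v where "e = {u, v}" "u \<noteq> v" "deg E u = k" "deg E v = k" "e \<in> E" by blast
    moreover have "u \<in> V" "v \<in> V"
      using sg \<open>e \<in> E\<close> \<open>e = {u, v}\<close> by (auto dest: simple_graph_edge_subset)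
    ultimately have "u \<in> {a, b, c}" "v \<in> {a, b, c}"
      using deg_k by (simp_all only: mem_Collect_eq flip: deg_k)
    with \<open>e = {u, v}\<close> \<open>u \<noteq> v\<close> show "e \<in> {{a, b}, {b, c}, {a, c}}"
      by (auto simp: insert_commute)
  qed
  moreover have "card {{a, b}, {b, c}, {a, c}} = 3"
    using \<open>a \<noteq> b\<close> \<open>b \<noteq> c\<close> \<open>a \<noteq> c\<close> by (simp add: doubleton_eq_iff)
  moreover have "3 \<le> card ?F"
    using \<open>\<not> medges E k k \<le> 2\<close> by (simp add: medges_def)
  ultimately have "?F = {{a, b}, {b, c}, {a, c}}"
    by (intro card_seteq) simp_all
  then have "{a, b} \<in> E" "{b, c} \<in> E" "{a, c} \<in> E" by auto
  with tree show False
    using \<open>a \<noteq> b\<close> \<open>b \<noteq> c\<close> \<open>a \<noteq> c\<close> by (rule is_tree_no_triangle)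
qed

section \<open>Trees with all degrees in {1, 2, 3}\<close>

lemma chemical_tree_deg_123:
  assumes "chemical_tree V E" and "max_degree V E \<le> 3" and "2 \<le> card V" and "v \<in> V"
  shows "deg E v \<in> {1, 2, 3}"
proof -
  have tree: "simple_graph V E" "connected_graph V E" "finite V"
    using assms(1) by (auto simp: chemical_tree_def is_tree_def simple_graph_def)
  have "deg E v \<le> max_degree V E"
    unfolding max_degree_def using tree(3) \<open>v \<in> V\<close> by simp
  moreover have "0 < deg E v"
    using tree(1,2) assms(3,4) by (rule connected_graph_deg_pos)
  ultimately show ?thesis using assms(2) by auto
qed

lemma tree_counts_123:
  assumes tree: "is_tree V E" and deg: "\<forall>v\<in>V. deg E v \<in> {1, 2, 3}" and "3 \<le> card V"
  defines "k \<equiv> int (num_deg V E 3)" and "a \<equiv> int (medges E 1 3)" and "x \<equiv> int (medges E 3 3)"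
  shows "medges E 1 1 = 0"
    and "int (num_deg V E 1) = k + 2"
    and "int (num_deg V E 2) = int (card V) - 2 * k - 2"
    and "int (medges E 1 2) = k + 2 - a"
    and "int (medges E 2 2) = int (card V) - 3 - 4 * k + a + x"
    and "int (medges E 2 3) = 3 * k - a - 2 * x"
proof -
  have sg: "simple_graph V E" and conn: "connected_graph V E"
    and card_E: "card E = card V - 1" and "finite V"
    using tree by (auto simp: is_tree_def simple_graph_def)
  show m11: "medges E 1 1 = 0"
    using sg conn \<open>3 \<le> card V\<close> by (rule connected_graph_medges_1_1)
  note vertices = card_vertices_123[OF \<open>finite V\<close> deg]
    and edges = card_edges_123[OF sg deg]
    and degrees = degree_count_123[OF sg deg]
  have "int (card E) = int (card V) - 1"
    using card_E \<open>3 \<le> card V\<close> by simp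
  with m11 vertices edges degrees
  show "int (num_deg V E 1) = k + 2"
    and "int (num_deg V E 2) = int (card V) - 2 * k - 2"
    and "int (medges E 1 2) = k + 2 - a"
    and "int (medges E 2 2) = int (card V) - 3 - 4 * k + a + x"
    and "int (medges E 2 3) = 3 * k - a - 2 * x"
    unfolding k_def a_def x_def by linarith+
qed

(* The first summand is the value on Omega(n), where (k, a, x) = (3, 0, 2). *)
lemma SO_tree_123:
  assumes tree: "is_tree V E" and deg: "\<forall>v\<in>V. deg E v \<in> {1, 2, 3}" and "3 \<le> card V"
  defines "k \<equiv> real (num_deg V E 3)" and "a \<equiv> real (medges E 1 3)"
    and "x \<equiv> real (medges E 3 3)" and "n \<equiv> real (card V)"
  shows "SO E = (5 * sqrt 5 + (n - 13) * sqrt 8 + 5 * sqrt 13 + 2 * sqrt 18) +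
      ((k - 3) * (sqrt 5 - 4 * sqrt 8 + 3 * sqrt 13) + a * (sqrt 10 + sqrt 8 - sqrt 5 - sqrt 13) +
       (x - 2) * (sqrt 8 - 2 * sqrt 13 + sqrt 18))"
    and "SO_red E = (5 + (n - 13) * sqrt 2 + 5 * sqrt 5 + 2 * sqrt 8) +
      ((k - 3) * (1 - 4 * sqrt 2 + 3 * sqrt 5) + a * (1 + sqrt 2 - sqrt 5) +
       (x - 2) * (sqrt 2 - 2 * sqrt 5 + sqrt 8))"
proof -
  have sg: "simple_graph V E" using tree by (simp add: is_tree_def)
  note counts = tree_counts_123[OF assms(1-3)]
  have "real (medges E 1 2) = k + 2 - a"
    and "real (medges E 2 2) = n - 3 - 4 * k + a + x"
    and "real (medges E 2 3) = 3 * k - a - 2 * x"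
    using counts(4-6)[THEN arg_cong[where f = real_of_int]]
    unfolding k_def a_def x_def n_def by simp_all
  with SO_123[OF sg deg] SO_red_123[OF sg deg] counts(1)
  have "SO E = (k + 2 - a) * sqrt 5 + a * sqrt 10 + (n - 3 - 4 * k + a + x) * sqrt 8 +
      (3 * k - a - 2 * x) * sqrt 13 + x * sqrt 18"
    and "SO_red E = (k + 2 - a) + 2 * a + (n - 3 - 4 * k + a + x) * sqrt 2 +
      (3 * k - a - 2 * x) * sqrt 5 + x * sqrt 8"
    unfolding a_def x_def by simp_all
  then show "SO E = (5 * sqrt 5 + (n - 13) * sqrt 8 + 5 * sqrt 13 + 2 * sqrt 18) +
      ((k - 3) * (sqrt 5 - 4 * sqrt 8 + 3 * sqrt 13) + a * (sqrt 10 + sqrt 8 - sqrt 5 - sqrt 13) +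
       (x - 2) * (sqrt 8 - 2 * sqrt 13 + sqrt 18))"
    and "SO_red E = (5 + (n - 13) * sqrt 2 + 5 * sqrt 5 + 2 * sqrt 8) +
      ((k - 3) * (1 - 4 * sqrt 2 + 3 * sqrt 5) + a * (1 + sqrt 2 - sqrt 5) +
       (x - 2) * (sqrt 2 - 2 * sqrt 5 + sqrt 8))"
    by (simp_all add: algebra_simps)
qed

lemma OmegaI:
  assumes tree: "is_tree V E" and deg: "\<forall>v\<in>V. deg E v \<in> {1, 2, 3}"
    and "card V = n" and "13 \<le> n"
    and "num_deg V E 3 = 3" and "medges E 3 3 = 2" and "medges E 1 3 = 0"
  shows "(V, E) \<in> Omega n"
proof -
  have "chemical_tree V E"
    using tree deg by (auto simp: chemical_tree_def)
  moreover note counts = tree_counts_123[OF tree deg]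
  ultimately show ?thesis
    using assms(3-) unfolding Omega_def by simp linarith
qed

lemma Omega_deg_123:
  assumes "(V, E) \<in> Omega n" and "13 \<le> n" and "v \<in> V"
  shows "deg E v \<in> {1, 2, 3}"
proof -
  let ?D = "\<lambda>k. {v \<in> V. deg E v = k}"
  have "chemical_tree V E" and "card V = n"
    and counts: "card (?D 1) = 5" "card (?D 2) = n - 8" "card (?D 3) = 3"
    using assms(1) by (simp_all add: Omega_def num_deg_def)
  then have "finite V" by (simp add: chemical_tree_def is_tree_def simple_graph_def)
  then have "card (?D 1 \<union> ?D 2 \<union> ?D 3) = card (?D 1) + card (?D 2) + card (?D 3)"
    by (simp add: card_Un_disjoint disjoint_iff)
  then have "card (?D 1 \<union> ?D 2 \<union> ?D 3) = card V"
    using counts \<open>card V = n\<close> \<open>13 \<le> n\<close> by simp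
  then have "?D 1 \<union> ?D 2 \<union> ?D 3 = V"
    using \<open>finite V\<close> by (intro card_subset_eq) auto
  with \<open>v \<in> V\<close> show ?thesis by auto
qed

lemma SO_Omega:
  assumes om: "(V, E) \<in> Omega n" and "13 \<le> n"
  shows "SO E = 5 * sqrt 5 + (real n - 13) * sqrt 8 + 5 * sqrt 13 + 2 * sqrt 18"
    and "SO_red E = 5 + (real n - 13) * sqrt 2 + 5 * sqrt 5 + 2 * sqrt 8"
proof -
  have "is_tree V E" and "card V = n"
    using om by (simp_all add: Omega_def chemical_tree_def)
  moreover have "\<forall>v\<in>V. deg E v \<in> {1, 2, 3}"
    using Omega_deg_123[OF om \<open>13 \<le> n\<close>] by blast
  ultimately show "SO E = 5 * sqrt 5 + (real n - 13) * sqrt 8 + 5 * sqrt 13 + 2 * sqrt 18"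
    and "SO_red E = 5 + (real n - 13) * sqrt 2 + 5 * sqrt 5 + 2 * sqrt 8"
    using SO_tree_123[of V E] om \<open>13 \<le> n\<close> by (simp_all add: Omega_def)
qed

section \<open>Trees in Omega(n) for every n \<ge> 13\<close>

lemma is_tree_add_leaf:
  assumes tree: "is_tree V E" and "l \<in> V" and "z \<notin> V"
  shows "is_tree (insert z V) (insert {l, z} E)"
proof -
  have sg: "simple_graph V E" and conn: "connected_graph V E"
    and card_E: "card E = card V - 1" and "finite V"
    using tree by (auto simp: is_tree_def simple_graph_def)
  have "l \<noteq> z" using assms by blast
  have "{l, z} \<notin> E" using \<open>z \<notin> V\<close> simple_graph_edge_subset[OF sg] by blast
  have "simple_graph (insert z V) (insert {l, z} E)"
    using sg \<open>l \<in> V\<close> \<open>l \<noteq> z\<close> by (auto simp: simple_graph_def)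
  moreover have "connected_graph (insert z V) (insert {l, z} E)"
  proof (rule connected_graph_from_root)
    have "(adj E)\<^sup>* \<subseteq> (adj (insert {l, z} E))\<^sup>*"
      by (intro rtrancl_mono) (auto simp: adj_def)
    moreover have "(l, z) \<in> adj (insert {l, z} E)"
      using \<open>l \<noteq> z\<close> by (simp add: adj_def)
    ultimately show "\<forall>v\<in>insert z V. (l, v) \<in> (adj (insert {l, z} E))\<^sup>*"
      using conn \<open>l \<in> V\<close> unfolding connected_graph_def by blast
  qed (use \<open>l \<in> V\<close> in simp)
  moreover have "card (insert {l, z} E) = card (insert z V) - 1"
    using card_E \<open>{l, z} \<notin> E\<close> \<open>z \<notin> V\<close> \<open>finite V\<close> \<open>l \<in> V\<close>
      simple_graph_finite_edges[OF sg] card_gt_0_iff[of V] by auto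
  ultimately show ?thesis by (simp add: is_tree_def)
qed

lemma deg_add_leaf:
  assumes sg: "simple_graph V E" and "l \<in> V" and "z \<notin> V"
  shows "deg (insert {l, z} E) z = 1"
    and "deg (insert {l, z} E) l = Suc (deg E l)"
    and "y \<noteq> l \<Longrightarrow> y \<noteq> z \<Longrightarrow> deg (insert {l, z} E) y = deg E y"
proof -
  have fresh: "z \<notin> e" if "e \<in> E" for e
    using simple_graph_edge_subset[OF sg that] \<open>z \<notin> V\<close> by blast
  have "{e \<in> insert {l, z} E. z \<in> e} = {{l, z}}" using fresh by auto
  then show "deg (insert {l, z} E) z = 1" by (simp add: deg_def)
  have "{e \<in> insert {l, z} E. l \<in> e} = insert {l, z} {e \<in> E. l \<in> e}" by auto
  moreover have "{l, z} \<notin> E" using fresh by blast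
  ultimately show "deg (insert {l, z} E) l = Suc (deg E l)"
    using simple_graph_finite_edges[OF sg] by (simp add: deg_def)
  show "deg (insert {l, z} E) y = deg E y" if "y \<noteq> l" "y \<noteq> z"
  proof -
    have "{e \<in> insert {l, z} E. y \<in> e} = {e \<in> E. y \<in> e}" using that by auto
    then show ?thesis by (simp add: deg_def)
  qed
qed

lemma edge_type_cong:
  "(\<And>v. v \<in> e \<Longrightarrow> deg E' v = deg E v) \<Longrightarrow> edge_type E' e = edge_type E e"
  unfolding edge_type_def by (metis image_cong)

lemma medges_pos:
  assumes "simple_graph V E" and "{u, v} \<in> E" and "u \<noteq> v" and "deg E u = i" and "deg E v = j"
  shows "0 < medges E i j"
proof -
  have "{u, v} \<in> {e \<in> E. \<exists>u v. e = {u, v} \<and> u \<noteq> v \<and>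
      (deg E u = i \<and> deg E v = j \<or> deg E u = j \<and> deg E v = i)}"
    using assms by blast
  then show ?thesis
    unfolding medges_def using simple_graph_finite_edges[OF assms(1)]
    by (metis (no_types, lifting) card_gt_0_iff empty_iff finite_subset mem_Collect_eq subsetI)
qed

lemma Omega_leafE:
  assumes om: "(V, E) \<in> Omega n" and "13 \<le> n"
  obtains l p where "l \<in> V" "p \<in> V" "l \<noteq> p" "{e \<in> E. l \<in> e} = {{l, p}}" "deg E p = 2"
proof -
  have tree: "is_tree V E" and "card V = n" and "num_deg V E 1 = 5"
    and "medges E 1 3 = 0"
    using om by (simp_all add: Omega_def chemical_tree_def)
  have sg: "simple_graph V E" using tree by (simp add: is_tree_def)
  have deg: "\<forall>v\<in>V. deg E v \<in> {1, 2, 3}"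
    using Omega_deg_123[OF om \<open>13 \<le> n\<close>] by blast
  have "medges E 1 1 = 0"
    using tree_counts_123(1)[OF tree deg] \<open>card V = n\<close> \<open>13 \<le> n\<close> by simp
  have "{v \<in> V. deg E v = 1} \<noteq> {}"
    using \<open>num_deg V E 1 = 5\<close> unfolding num_deg_def by (metis card.empty zero_neq_numeral)
  then obtain l where "l \<in> V" "deg E l = 1" by blast
  from \<open>deg E l = 1\<close> obtain e0 where e0: "{e \<in> E. l \<in> e} = {e0}"
    unfolding deg_def by (rule card_1_singletonE)
  then have "e0 \<in> E" "l \<in> e0" by auto
  with sg obtain p where "e0 = {l, p}" "l \<noteq> p" "p \<in> V"
    by (elim simple_graph_edgeE) (auto simp: insert_commute)
  have "deg E p \<noteq> 1" "deg E p \<noteq> 3"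
    using medges_pos[OF sg, of l p 1] medges_pos[OF sg, of l p 1 3]
      \<open>e0 \<in> E\<close> \<open>e0 = {l, p}\<close> \<open>l \<noteq> p\<close> \<open>deg E l = 1\<close> \<open>medges E 1 1 = 0\<close> \<open>medges E 1 3 = 0\<close>
    by auto
  with deg \<open>p \<in> V\<close> have "deg E p = 2" by auto
  with \<open>l \<in> V\<close> \<open>p \<in> V\<close> \<open>l \<noteq> p\<close> e0 \<open>e0 = {l, p}\<close> show ?thesis by (intro that) auto
qed

lemma num_deg_add_leaf_to_leaf:
  assumes sg: "simple_graph V E" and "l \<in> V" and "z \<notin> V" and "deg E l = 1"
    and "k \<noteq> 1" and "k \<noteq> 2"
  shows "num_deg (insert z V) (insert {l, z} E) k = num_deg V E k"
proof -
  note deg' = deg_add_leaf[OF sg \<open>l \<in> V\<close> \<open>z \<notin> V\<close>]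
  have "deg (insert {l, z} E) v = k \<longleftrightarrow> deg E v = k" if "v \<in> V" for v
  proof -
    have "v \<noteq> z" using that \<open>z \<notin> V\<close> by blast
    then show ?thesis using deg'(2) deg'(3)[of v] assms(4-6) by (cases "v = l") auto
  qed
  then have "{v \<in> insert z V. deg (insert {l, z} E) v = k} = {v \<in> V. deg E v = k}"
    using deg'(1) \<open>k \<noteq> 1\<close> by auto
  then show ?thesis by (simp add: num_deg_def)
qed

lemma medges_add_leaf_to_leaf:
  assumes sg: "simple_graph V E" and "z \<notin> V" and star_l: "{e \<in> E. l \<in> e} = {{l, p}}"
    and "l \<noteq> p" and "deg E p = 2"
    and "i \<le> j" and "(i, j) \<noteq> (1, 2)" and "(i, j) \<noteq> (2, 2)"
  shows "medges (insert {l, z} E) i j = medges E i j"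
proof -
  let ?E' = "insert {l, z} E"
  have "{l, p} \<in> E" using star_l by blast
  then have "l \<in> V" "p \<in> V" using simple_graph_edge_subset[OF sg] by auto
  with \<open>z \<notin> V\<close> have "l \<noteq> z" "p \<noteq> z" by auto
  have "{l, z} \<notin> E" using simple_graph_edge_subset[OF sg] \<open>z \<notin> V\<close> by blast
  have sg': "simple_graph (insert z V) ?E'"
    using sg \<open>l \<in> V\<close> \<open>l \<noteq> z\<close> by (auto simp: simple_graph_def)
  note deg' = deg_add_leaf[OF sg \<open>l \<in> V\<close> \<open>z \<notin> V\<close>]
  have "deg E l = 1" using star_l by (simp add: deg_def)
  have same_type: "edge_type ?E' e = edge_type E e" if "e \<in> E" "e \<noteq> {l, p}" for e
  proof (rule edge_type_cong)
    fix v assume "v \<in> e"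
    moreover have "l \<notin> e" "z \<notin> e"
      using that star_l simple_graph_edge_subset[OF sg] \<open>z \<notin> V\<close> by blast+
    ultimately show "deg ?E' v = deg E v" by (intro deg'(3)) auto
  qed
  have new_types: "edge_type ?E' {l, z} = (1, 2)" "edge_type ?E' {l, p} = (2, 2)"
    "edge_type E {l, p} = (1, 2)"
    using deg' \<open>deg E l = 1\<close> \<open>deg E p = 2\<close> \<open>l \<noteq> p\<close> \<open>p \<noteq> z\<close>
    by (simp_all add: edge_type_doubleton)
  have "{e \<in> ?E'. edge_type ?E' e = (i, j)} = {e \<in> E. edge_type E e = (i, j)}"
  proof (rule set_eqI)
    fix e
    show "e \<in> {e \<in> ?E'. edge_type ?E' e = (i, j)} \<longleftrightarrow> e \<in> {e \<in> E. edge_type E e = (i, j)}"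
      using assms(7,8) same_type[of e] new_types \<open>{l, z} \<notin> E\<close>
      by (cases "e = {l, p}"; cases "e = {l, z}") auto
  qed
  then show ?thesis
    using \<open>i \<le> j\<close> by (simp add: medges_eq_card_edge_type[OF sg] medges_eq_card_edge_type[OF sg'])
qed

lemma Omega_add_leaf:
  assumes om: "(V, E) \<in> Omega n" and "13 \<le> n" and "z \<notin> V"
  shows "\<exists>E'. (insert z V, E') \<in> Omega (Suc n)"
proof -
  obtain l p where "l \<in> V" "p \<in> V" "l \<noteq> p" and star_l: "{e \<in> E. l \<in> e} = {{l, p}}"
    and "deg E p = 2"
    using om \<open>13 \<le> n\<close> by (rule Omega_leafE)
  have tree: "is_tree V E" and "card V = n" and "finite V"
    and "num_deg V E 3 = 3" and "medges E 3 3 = 2" and "medges E 1 3 = 0"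
    using om by (simp_all add: Omega_def chemical_tree_def is_tree_def simple_graph_def)
  then have sg: "simple_graph V E" by (simp add: is_tree_def)
  have "deg E l = 1" using star_l by (simp add: deg_def)
  note deg' = deg_add_leaf[OF sg \<open>l \<in> V\<close> \<open>z \<notin> V\<close>]
  have "\<forall>v\<in>insert z V. deg (insert {l, z} E) v \<in> {1, 2, 3}"
  proof
    fix v assume "v \<in> insert z V"
    then show "deg (insert {l, z} E) v \<in> {1, 2, 3}"
      using Omega_deg_123[OF om \<open>13 \<le> n\<close>] deg'(1,2) deg'(3)[of v] \<open>deg E l = 1\<close>
      by (cases "v = l"; cases "v = z") auto
  qed
  moreover note is_tree_add_leaf[OF tree \<open>l \<in> V\<close> \<open>z \<notin> V\<close>]
    num_deg_add_leaf_to_leaf[OF sg \<open>l \<in> V\<close> \<open>z \<notin> V\<close> \<open>deg E l = 1\<close>, of 3]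
    medges_add_leaf_to_leaf[OF sg \<open>z \<notin> V\<close> star_l \<open>l \<noteq> p\<close> \<open>deg E p = 2\<close>]
  ultimately have "(insert z V, insert {l, z} E) \<in> Omega (Suc n)"
    using \<open>card V = n\<close> \<open>13 \<le> n\<close> \<open>finite V\<close> \<open>z \<notin> V\<close> \<open>num_deg V E 3 = 3\<close>
      \<open>medges E 3 3 = 2\<close> \<open>medges E 1 3 = 0\<close>
    by (intro OmegaI) auto
  then show ?thesis by blast
qed

lemma simple_graph_image:
  assumes sg: "simple_graph V E" and inj: "inj_on f V"
  shows "simple_graph (f ` V) ((`) f ` E)"
  unfolding simple_graph_def
proof (intro conjI ballI)
  show "finite (f ` V)" using sg by (simp add: simple_graph_def)
  fix e' assume "e' \<in> (`) f ` E"
  then obtain e where "e \<in> E" "e' = f ` e" by blast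
  moreover have "e \<subseteq> V" using sg \<open>e \<in> E\<close> by (rule simple_graph_edge_subset)
  moreover have "card e = 2" using sg \<open>e \<in> E\<close> by (simp add: simple_graph_def)
  ultimately show "e' \<subseteq> f ` V" "card e' = 2"
    using inj_on_subset[OF inj] by (auto simp: card_image)
qed

lemma inj_on_image_edges:
  assumes sg: "simple_graph V E" and inj: "inj_on f V"
  shows "inj_on ((`) f) E"
  using inj_on_image_Pow[OF inj] by (rule inj_on_subset) (auto dest: simple_graph_edge_subset[OF sg])

lemma deg_image:
  assumes sg: "simple_graph V E" and inj: "inj_on f V" and "v \<in> V"
  shows "deg ((`) f ` E) (f v) = deg E v"
proof -
  have inj_E: "inj_on ((`) f) E"
    using sg inj by (rule inj_on_image_edges)
  have "{e' \<in> (`) f ` E. f v \<in> e'} = (`) f ` {e \<in> E. v \<in> e}"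
  proof (intro equalityI subsetI)
    fix e' assume "e' \<in> {e' \<in> (`) f ` E. f v \<in> e'}"
    then obtain e where "e \<in> E" "e' = f ` e" "f v \<in> f ` e" by blast
    moreover have "e \<subseteq> V" using sg \<open>e \<in> E\<close> by (rule simple_graph_edge_subset)
    ultimately show "e' \<in> (`) f ` {e \<in> E. v \<in> e}"
      using inj_on_image_mem_iff[OF inj \<open>v \<in> V\<close>] by blast
  qed auto
  moreover have "inj_on ((`) f) {e \<in> E. v \<in> e}"
    using inj_E by (rule inj_on_subset) blast
  ultimately show ?thesis by (simp add: deg_def card_image)
qed

lemma edge_type_image:
  assumes "simple_graph V E" and "inj_on f V" and "e \<in> E"
  shows "edge_type ((`) f ` E) (f ` e) = edge_type E e"
proof -
  have "deg ((`) f ` E) ` f ` e = deg E ` e"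
    using deg_image[OF assms(1,2)] simple_graph_edge_subset[OF assms(1,3)]
    unfolding image_image by (intro image_cong) auto
  then show ?thesis by (simp add: edge_type_def)
qed

lemma medges_image:
  assumes sg: "simple_graph V E" and inj: "inj_on f V" and "i \<le> j"
  shows "medges ((`) f ` E) i j = medges E i j"
proof -
  have inj_E: "inj_on ((`) f) E"
    using sg inj by (rule inj_on_image_edges)
  have "{e' \<in> (`) f ` E. edge_type ((`) f ` E) e' = (i, j)} = (`) f ` {e \<in> E. edge_type E e = (i, j)}"
    using edge_type_image[OF sg inj] by auto
  moreover have "inj_on ((`) f) {e \<in> E. edge_type E e = (i, j)}"
    using inj_E by (rule inj_on_subset) blast
  ultimately show ?thesis
    using \<open>i \<le> j\<close> by (simp add: medges_eq_card_edge_type[OF sg]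
        medges_eq_card_edge_type[OF simple_graph_image[OF sg inj]] card_image)
qed

lemma num_deg_image:
  assumes "simple_graph V E" and "inj_on f V"
  shows "num_deg (f ` V) ((`) f ` E) k = num_deg V E k"
proof -
  have "{v' \<in> f ` V. deg ((`) f ` E) v' = k} = f ` {v \<in> V. deg E v = k}"
    using deg_image[OF assms] by force
  moreover have "inj_on f {v \<in> V. deg E v = k}"
    using assms(2) by (rule inj_on_subset) blast
  ultimately show ?thesis by (simp add: num_deg_def card_image)
qed

lemma connected_graph_image:
  assumes sg: "simple_graph V E" and conn: "connected_graph V E" and inj: "inj_on f V"
  shows "connected_graph (f ` V) ((`) f ` E)"
  unfolding connected_graph_def
proof (intro ballI)
  fix u' w' assume "u' \<in> f ` V" "w' \<in> f ` V"
  then obtain u w where "u \<in> V" "w \<in> V" "u' = f u" "w' = f w" by blast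
  have "(u, w) \<in> (adj E)\<^sup>*"
    using conn \<open>u \<in> V\<close> \<open>w \<in> V\<close> unfolding connected_graph_def by blast
  then have "(f u, f w) \<in> (adj ((`) f ` E))\<^sup>*"
  proof induction
    case (step y y')
    then have "{y, y'} \<in> E" "y \<noteq> y'" by (auto simp: adj_def)
    moreover have "y \<in> V" "y' \<in> V"
      using simple_graph_edge_subset[OF sg \<open>{y, y'} \<in> E\<close>] by auto
    ultimately have "f y \<noteq> f y'" using inj by (meson inj_onD)
    moreover have "f ` {y, y'} \<in> (`) f ` E" using \<open>{y, y'} \<in> E\<close> by (rule imageI)
    ultimately have "(f y, f y') \<in> adj ((`) f ` E)" by (simp add: adj_def)
    with step.IH show ?case by (rule rtrancl_into_rtrancl)
  qed simp
  with \<open>u' = f u\<close> \<open>w' = f w\<close> show "(u', w') \<in> (adj ((`) f ` E))\<^sup>*" by simp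
qed

lemma Omega_image:
  assumes om: "(V, E) \<in> Omega n" and "13 \<le> n" and inj: "inj_on f V"
  shows "(f ` V, (`) f ` E) \<in> Omega n"
proof (rule OmegaI)
  have tree: "is_tree V E" using om by (simp add: Omega_def chemical_tree_def)
  then have sg: "simple_graph V E" and conn: "connected_graph V E"
    and card_E: "card E = card V - 1" and "V \<noteq> {}"
    by (auto simp: is_tree_def)
  have "inj_on ((`) f) E"
    using sg inj by (rule inj_on_image_edges)
  then show "is_tree (f ` V) ((`) f ` E)"
    using simple_graph_image[OF sg inj] connected_graph_image[OF sg conn inj]
      card_E \<open>V \<noteq> {}\<close> inj by (simp add: is_tree_def card_image)
  show "\<forall>v'\<in>f ` V. deg ((`) f ` E) v' \<in> {1, 2, 3}"
  proof
    fix v' assume "v' \<in> f ` V"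
    then obtain v where "v \<in> V" "v' = f v" by blast
    then show "deg ((`) f ` E) v' \<in> {1, 2, 3}"
      using Omega_deg_123[OF om \<open>13 \<le> n\<close> \<open>v \<in> V\<close>] deg_image[OF sg inj \<open>v \<in> V\<close>] by simp
  qed
  show "card (f ` V) = n" "num_deg (f ` V) ((`) f ` E) 3 = 3"
    "medges ((`) f ` E) 3 3 = 2" "medges ((`) f ` E) 1 3 = 0"
    using om inj by (simp_all add: Omega_def card_image num_deg_image[OF sg inj] medges_image[OF sg inj])
qed (fact \<open>13 \<le> n\<close>)

(* Vertices 0, 1, 2 have degree 3 and form a path; the other ten vertices form five pendant
   paths of length 2. *)
definition Omega_seed :: "nat set set" where
  "Omega_seed = {{0, 1}, {0, 2}, {0, 11}, {11, 12}, {1, 3}, {3, 4}, {1, 5}, {5, 6},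
    {2, 7}, {7, 8}, {2, 9}, {9, 10}}"

lemma deg_Omega_seed:
  assumes "v < 13"
  shows "deg Omega_seed v = (if v \<in> {0, 1, 2} then 3 else if v \<in> {4, 6, 8, 10, 12} then 1 else 2)"
proof -
  have filter_insert: "{x \<in> insert a A. P x} = (if P a then insert a {x \<in> A. P x} else {x \<in> A. P x})"
    for a A and P :: "nat set \<Rightarrow> bool"
    by auto
  from assms have "v \<in> {0, 1, 2, 3, 4, 5, 6, 7, 8, 9, 10, 11, 12}"
    unfolding insert_iff empty_iff by presburger
  then show ?thesis
    by (elim insertE emptyE; simp only: deg_def Omega_seed_def filter_insert; simp add: doubleton_eq_iff)
qed

lemma connected_graph_Omega_seed: "connected_graph {0..<13} Omega_seed"
proof (rule connected_graph_from_root[of 0])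
  have step: "(a, b) \<in> (adj Omega_seed)\<^sup>*" if "{a, b} \<in> Omega_seed" "a \<noteq> b" for a b
    using that by (simp add: adj_def r_into_rtrancl)
  have "(0, 1) \<in> (adj Omega_seed)\<^sup>*" "(1, 3) \<in> (adj Omega_seed)\<^sup>*" "(3, 4) \<in> (adj Omega_seed)\<^sup>*"
    "(1, 5) \<in> (adj Omega_seed)\<^sup>*" "(5, 6) \<in> (adj Omega_seed)\<^sup>*" "(0, 2) \<in> (adj Omega_seed)\<^sup>*"
    "(2, 7) \<in> (adj Omega_seed)\<^sup>*" "(7, 8) \<in> (adj Omega_seed)\<^sup>*" "(2, 9) \<in> (adj Omega_seed)\<^sup>*"
    "(9, 10) \<in> (adj Omega_seed)\<^sup>*" "(0, 11) \<in> (adj Omega_seed)\<^sup>*" "(11, 12) \<in> (adj Omega_seed)\<^sup>*"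
    by (rule step; simp add: Omega_seed_def)+
  moreover have "v \<in> {0..<13} \<Longrightarrow> v \<in> {0, 1, 2, 3, 4, 5, 6, 7, 8, 9, 10, 11, 12}" for v :: nat
    unfolding insert_iff empty_iff atLeastLessThan_iff by presburger
  ultimately show "\<forall>v\<in>{0..<13}. (0, v) \<in> (adj Omega_seed)\<^sup>*"
    by (metis (no_types, lifting) emptyE insertE rtrancl_trans rtrancl.rtrancl_refl)
qed simp

lemma Omega_seed_in_Omega: "({0..<13}, Omega_seed) \<in> Omega 13"
proof (rule OmegaI)
  have sg: "simple_graph {0..<13} Omega_seed"
    unfolding simple_graph_def Omega_seed_def by auto
  have "card Omega_seed = 12"
    unfolding Omega_seed_def by (simp add: doubleton_eq_iff)
  then show "is_tree {0..<13} Omega_seed"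
    using sg connected_graph_Omega_seed by (simp add: is_tree_def)
  show "\<forall>v\<in>{0..<13}. deg Omega_seed v \<in> {1, 2, 3}"
    by (auto simp: deg_Omega_seed)
  have "{v \<in> {0..<13}. deg Omega_seed v = 3} = {0, 1, 2}"
    by (auto simp: deg_Omega_seed split: if_splits)
  then show "num_deg {0..<13} Omega_seed 3 = 3"
    by (simp add: num_deg_def)
  have edges: "e \<in> Omega_seed \<longleftrightarrow> e \<in> {{0, 1}, {0, 2}, {0, 11}, {11, 12}, {1, 3}, {3, 4},
      {1, 5}, {5, 6}, {2, 7}, {7, 8}, {2, 9}, {9, 10}}" for e
    by (simp add: Omega_seed_def)
  have types_33: "{e \<in> Omega_seed. edge_type Omega_seed e = (3, 3)} = {{0, 1}, {0, 2}}"
    and types_13: "{e \<in> Omega_seed. edge_type Omega_seed e = (1, 3)} = {}"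
    unfolding edges by (auto simp: edge_type_doubleton deg_Omega_seed)
  show "medges Omega_seed 3 3 = 2"
    using medges_eq_card_edge_type[OF sg, of 3 3] unfolding types_33 by (simp add: doubleton_eq_iff)
  show "medges Omega_seed 1 3 = 0"
    using medges_eq_card_edge_type[OF sg, of 1 3] unfolding types_13 by simp
qed simp_all

lemma Omega_nonempty_nat: "13 \<le> m \<Longrightarrow> \<exists>E. ({0..<m}, E) \<in> Omega m"
proof (induction m rule: dec_induct)
  case base
  show ?case using Omega_seed_in_Omega by blast
next
  case (step m)
  then obtain E where "({0..<m}, E) \<in> Omega m" by blast
  then have "\<exists>E'. (insert m {0..<m}, E') \<in> Omega (Suc m)"
    using \<open>13 \<le> m\<close> by (intro Omega_add_leaf) auto
  moreover have "insert m {0..<m} = {0..<Suc m}" by auto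
  ultimately show ?case by simp
qed

lemma Omega_nonempty:
  assumes "finite V" and "card V = n" and "13 \<le> n"
  shows "\<exists>E. (V, E) \<in> Omega n"
proof -
  obtain h where "bij_betw h {0..<n} V"
    using ex_bij_betw_nat_finite[OF \<open>finite V\<close>] \<open>card V = n\<close> by blast
  then have "inj_on h {0..<n}" "h ` {0..<n} = V" by (auto simp: bij_betw_def)
  moreover obtain E where "({0..<n}, E) \<in> Omega n"
    using Omega_nonempty_nat[OF \<open>13 \<le> n\<close>] by blast
  ultimately show ?thesis
    using Omega_image[of "{0..<n}" _ n h] \<open>13 \<le> n\<close> by metis
qed

(* For k >= 4 the negative term (x - 2) c3 is bounded via 2 x <= 3 k; k = 4 is the extreme
   case and needs c1 + 4 c3 > 0. *)
lemma weighted_gap_pos: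
  fixes k a x :: nat and c1 c2 c3 :: real
  assumes "3 \<le> k" and "a + 2 * x \<le> 3 * k" and "k = 3 \<longrightarrow> x \<le> 2"
    and "\<not> (k = 3 \<and> a = 0 \<and> x = 2)"
    and "0 < c2" and "c3 < 0" and "0 < c1 + 4 * c3"
  shows "0 < (real k - 3) * c1 + real a * c2 + (real x - 2) * c3"
proof -
  have "0 \<le> real a * c2" using \<open>0 < c2\<close> by simp
  show ?thesis
  proof (cases "k = 3")
    case True
    then consider "x < 2" | "x = 2" "0 < a"
      using assms(3,4) by fastforce
    then show ?thesis
    proof cases
      case 1
      then have "0 < (real x - 2) * c3" using \<open>c3 < 0\<close> by (simp add: mult_neg_neg)
      with \<open>k = 3\<close> \<open>0 \<le> real a * c2\<close> show ?thesis by simp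
    next
      case 2
      then have "0 < real a * c2" using \<open>0 < c2\<close> by simp
      with \<open>k = 3\<close> \<open>x = 2\<close> show ?thesis by simp
    qed
  next
    case False
    then have "4 \<le> real k" using \<open>3 \<le> k\<close> by simp
    have "2 * real x \<le> 3 * real k" using assms(2) by linarith
    then have "(3 / 2 * real k - 2) * c3 \<le> (real x - 2) * c3"
      using \<open>c3 < 0\<close> by (intro mult_right_mono_neg) auto
    moreover have "(real k - 3) * (4 * - c3) < (real k - 3) * c1"
      using \<open>4 \<le> real k\<close> \<open>0 < c1 + 4 * c3\<close> by (intro mult_strict_left_mono) auto
    moreover have "0 \<le> (- c3) * (5 / 2 * real k - 10)"
      using \<open>4 \<le> real k\<close> \<open>c3 < 0\<close> by (intro mult_nonneg_nonneg) auto
    moreover have "(real k - 3) * (4 * - c3) + (3 / 2 * real k - 2) * c3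
        = (- c3) * (5 / 2 * real k - 10)"
      by (simp add: algebra_simps)
    ultimately show ?thesis using \<open>0 \<le> real a * c2\<close> by linarith
  qed
qed

lemma sqrt_bounds:
  "14142 / 10000 < sqrt 2" "sqrt 2 < 14143 / 10000" "22360 / 10000 < sqrt 5" "sqrt 5 < 22361 / 10000"
  "28284 / 10000 < sqrt 8" "sqrt 8 < 28285 / 10000" "31622 / 10000 < sqrt 10" "sqrt 10 < 31623 / 10000"
  "36055 / 10000 < sqrt 13" "sqrt 13 < 36056 / 10000" "42426 / 10000 < sqrt 18" "sqrt 18 < 42427 / 10000"
  by (rule real_less_rsqrt real_less_lsqrt; simp add: power2_eq_square)+

lemma SO_coefficients:
  "0 < sqrt 10 + sqrt 8 - sqrt 5 - sqrt 13"
  "sqrt 8 - 2 * sqrt 13 + sqrt 18 < 0"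
  "0 < (sqrt 5 - 4 * sqrt 8 + 3 * sqrt 13) + 4 * (sqrt 8 - 2 * sqrt 13 + sqrt 18)"
  using sqrt_bounds by argo+

lemma SO_red_coefficients:
  "0 < 1 + sqrt 2 - sqrt 5"
  "sqrt 2 - 2 * sqrt 5 + sqrt 8 < 0"
  "0 < (1 - 4 * sqrt 2 + 3 * sqrt 5) + 4 * (sqrt 2 - 2 * sqrt 5 + sqrt 8)"
  using sqrt_bounds by argo+

theorem theorem3p2:
  fixes n :: nat and V :: "'a set" and E :: "'a set set"
  assumes "n \<ge> 13"
    and "chemical_tree V E" and "card V = n"
    and "max_degree V E = 3"
    and "num_deg V E 3 \<ge> 3"
    and "(V, E) \<notin> Omega n"
  shows "\<exists>V' E'. (V', E') \<in> (Omega n :: ('a set \<times> 'a set set) set) \<and>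
           SO E' < SO E \<and> SO_red E' < SO_red E"
proof -
  have tree: "is_tree V E" and "finite V"
    using assms(2) by (auto simp: chemical_tree_def is_tree_def simple_graph_def)
  have deg: "\<forall>v\<in>V. deg E v \<in> {1, 2, 3}"
    using chemical_tree_deg_123[OF assms(2) eq_refl[OF assms(4)]] assms(1,3) by auto
  obtain E' where opt: "(V, E') \<in> Omega n"
    using Omega_nonempty[OF \<open>finite V\<close> assms(3,1)] by blast
  define k a x where "k = num_deg V E 3" and "a = medges E 1 3" and "x = medges E 3 3"
  have k3: "3 \<le> k" using assms(5) by (simp add: k_def)
  have handshake: "a + 2 * x \<le> 3 * k"
    using degree_count_123(3)[OF _ deg] tree unfolding k_def a_def x_def is_tree_def by simp
  have no_triangle: "k = 3 \<longrightarrow> x \<le> 2"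
    using is_tree_medges_le_2[OF tree] unfolding k_def x_def by simp
  have not_optimal: "\<not> (k = 3 \<and> a = 0 \<and> x = 2)"
    using OmegaI[OF tree deg assms(3,1)] assms(6) unfolding k_def a_def x_def by blast
  note gap = weighted_gap_pos[OF k3 handshake no_triangle not_optimal]
  have "SO E' < SO E" "SO_red E' < SO_red E"
    using SO_tree_123[OF tree deg, folded k_def a_def x_def] SO_Omega[OF opt assms(1)]
      gap[OF SO_coefficients] gap[OF SO_red_coefficients] assms(1,3)
    by simp_all
  with opt show ?thesis by blast
qed

end
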